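(* Let $(X,\Sigma)$ be a measurable space and $p$ a transition function on it with associated operator $A$ on $ba(X,\Sigma)$. Suppose $A$ has a finitely additive cycle of measures $K=\{\mu_1,\dots,\mu_m\}\subset S_{ba}$ (of any period $m$) whose mean measure $\mu=\frac1m\sum_{i=1}^m\mu_i$ is the only invariant finitely additive probability measure of $A$, i.e. $\Delta_{ba}=\{\mu\}$. Then the cycle $K$ (all $\mu_i$) and its mean measure $\mu$ are countably additive.
   Context: $X$ is an arbitrary infinite set and $\Sigma$ a $\sigma$-algebra of subsets of $X$ containing all one-point sets. $ba(X,\Sigma)$ denotes the space of bounded finitely additive real-valued measures on $\Sigma$, $S_{ba}=\{\mu\in ba(X,\Sigma):\mu\ge0,\ \mu(X)=1\}$, and $\Delta_{ba}=\{\mu\in S_{ba}:A\mu=\mu\}$. A transition function is a map $p(x,E)$ with $0\le p(x,E)\le1$, $p(x,X)=1$, $p(\cdot,E)$ bounded $\Sigma$-measurable for every $E\in\Sigma$, and $p(x,\cdot)$ countably additive for every $x\in X$. The Markov operator is $A\mu(E)=\int_X p(x,E)\,\mu(dx)$. A cycle of measures of $A$ is a finite numbered set $\{\mu_1,\dots,\mu_m\}$ of pairwise different positive finitely additive measures with $A\mu_i=\mu_{i+1}$ ($1\le i\le m-1$), $A\mu_m=\mu_1$. *)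

theory Defs
  imports "HOL-Analysis.Analysis"
begin

text \<open>Measurable space (X, Sigma) is represented by a measure M with X = space M and
Sigma = sets M (the measure component of M is irrelevant).
Set functions are represented as functions 'a set => real; elements of ba(X,Sigma)
are normalised to vanish outside Sigma, so equality of measures is plain equality.\<close>

definition ba :: "'a measure \<Rightarrow> ('a set \<Rightarrow> real) set" where
  "ba M = {\<mu>. (\<forall>E. E \<notin> sets M \<longrightarrow> \<mu> E = 0)
              \<and> \<mu> {} = 0
              \<and> (\<forall>A\<in>sets M. \<forall>B\<in>sets M. A \<inter> B = {} \<longrightarrow> \<mu> (A \<union> B) = \<mu> A + \<mu> B)
              \<and> (\<exists>c. \<forall>A\<in>sets M. \<bar>\<mu> A\<bar> \<le> c)}"

definition S_ba :: "'a measure \<Rightarrow> ('a set \<Rightarrow> real) set" where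
  "S_ba M = {\<mu>\<in>ba M. (\<forall>A\<in>sets M. 0 \<le> \<mu> A) \<and> \<mu> (space M) = 1}"

definition countably_additive_on :: "'a measure \<Rightarrow> ('a set \<Rightarrow> real) \<Rightarrow> bool" where
  "countably_additive_on M \<mu> \<longleftrightarrow>
     (\<forall>F::nat \<Rightarrow> 'a set. range F \<subseteq> sets M \<longrightarrow> disjoint_family F \<longrightarrow>
        (\<lambda>n. \<mu> (F n)) sums \<mu> (\<Union>n. F n))"

definition transition_function :: "'a measure \<Rightarrow> ('a \<Rightarrow> 'a set \<Rightarrow> real) \<Rightarrow> bool" where
  "transition_function M p \<longleftrightarrow>
     (\<forall>x\<in>space M. \<forall>E\<in>sets M. 0 \<le> p x E \<and> p x E \<le> 1)
   \<and> (\<forall>x\<in>space M. p x (space M) = 1)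
   \<and> (\<forall>E\<in>sets M. (\<lambda>x. p x E) \<in> borel_measurable M)
   \<and> (\<forall>x\<in>space M. countably_additive_on M (p x))"

definition fa_partitions :: "'a measure \<Rightarrow> 'a set set set" where
  "fa_partitions M = {P. finite P \<and> P \<subseteq> sets M \<and> {} \<notin> P \<and> \<Union>P = space M
                        \<and> disjoint P}"

definition fa_integral :: "'a measure \<Rightarrow> ('a set \<Rightarrow> real) \<Rightarrow> ('a \<Rightarrow> real) \<Rightarrow> real" where
  "fa_integral M \<mu> f = (SUP P\<in>fa_partitions M. \<Sum>B\<in>P. (INF x\<in>B. f x) * \<mu> B)"

definition markov_op :: "'a measure \<Rightarrow> ('a \<Rightarrow> 'a set \<Rightarrow> real) \<Rightarrow> ('a set \<Rightarrow> real) \<Rightarrow> ('a set \<Rightarrow> real)" where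
  "markov_op M p \<mu> = (\<lambda>E. if E \<in> sets M then fa_integral M \<mu> (\<lambda>x. p x E) else 0)"

definition Delta_ba :: "'a measure \<Rightarrow> ('a \<Rightarrow> 'a set \<Rightarrow> real) \<Rightarrow> ('a set \<Rightarrow> real) set" where
  "Delta_ba M p = {\<nu>\<in>S_ba M. markov_op M p \<nu> = \<nu>}"

text \<open>Cycle of measures mu 0, ..., mu (m-1) (indices shifted from 1..m).\<close>
definition is_cycle :: "'a measure \<Rightarrow> ('a \<Rightarrow> 'a set \<Rightarrow> real) \<Rightarrow> nat \<Rightarrow> (nat \<Rightarrow> 'a set \<Rightarrow> real) \<Rightarrow> bool" where
  "is_cycle M p m \<mu> \<longleftrightarrow> m \<ge> 1 \<and> inj_on \<mu> {..<m}
     \<and> (\<forall>i<m. \<mu> i \<in> ba M \<and> (\<forall>A\<in>sets M. 0 \<le> \<mu> i A))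
     \<and> (\<forall>i. Suc i < m \<longrightarrow> markov_op M p (\<mu> i) = \<mu> (Suc i))
     \<and> markov_op M p (\<mu> (m - 1)) = \<mu> 0"

definition mean_measure :: "nat \<Rightarrow> (nat \<Rightarrow> 'a set \<Rightarrow> real) \<Rightarrow> 'a set \<Rightarrow> real" where
  "mean_measure m \<mu> = (\<lambda>E. (\<Sum>i<m. \<mu> i E) / real m)"

end

(*
  Start the chain at a point mass: q_k = A^k delta_x are countably additive probabilities,
  because A preserves countable additivity (if G_n decreases to the empty set, then
  p(., G_n) decreases to 0 pointwise, and A nu (G_n) <= eta + nu {p(., G_n) > eta}).
  Their Cesaro means nu_n are countably additive and almost invariant, since
  A nu_n - nu_n = (q_(n+1) - q_0) / (n + 1).  By compactness of [0,1]^Sigma in the product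
  topology, every infinite subsequence of (nu_n) has a setwise cluster point; it lies in S_ba
  and is A-invariant, hence equals the unique invariant measure mu.  So nu_n -> mu setwise,
  and a sliding-hump argument as in Nikodym's convergence theorem shows that mu is countably
  additive.  Finally mu_i <= m mu, so every mu_i is countably additive as well.
*)
theory Submission
  imports Defs
begin

section \<open>Finitely additive probability measures\<close>

definition fa_measure :: "'a measure \<Rightarrow> ('a set \<Rightarrow> real) \<Rightarrow> bool" where
  "fa_measure M \<nu> \<longleftrightarrow> additive (sets M) \<nu> \<and> (\<forall>A\<in>sets M. 0 \<le> \<nu> A)"

lemma fa_measure_empty: "fa_measure M \<nu> \<Longrightarrow> \<nu> {} = 0"
  using additiveD[of "sets M" \<nu> "{}" "{}"] by (simp add: fa_measure_def)

lemma fa_measure_Un: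
  "fa_measure M \<nu> \<Longrightarrow> A \<in> sets M \<Longrightarrow> B \<in> sets M \<Longrightarrow> A \<inter> B = {} \<Longrightarrow> \<nu> (A \<union> B) = \<nu> A + \<nu> B"
  unfolding fa_measure_def additive_def by blast

lemma fa_measure_nonneg: "fa_measure M \<nu> \<Longrightarrow> A \<in> sets M \<Longrightarrow> 0 \<le> \<nu> A"
  by (simp add: fa_measure_def)

lemma fa_measure_Diff:
  assumes "fa_measure M \<nu>" "A \<in> sets M" "B \<in> sets M" "A \<subseteq> B"
  shows "\<nu> (B - A) = \<nu> B - \<nu> A"
  using fa_measure_Un[OF assms(1,2), of "B - A"] assms by (simp add: Un_absorb1)

lemma fa_measure_mono:
  assumes "fa_measure M \<nu>" "A \<in> sets M" "B \<in> sets M" "A \<subseteq> B"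
  shows "\<nu> A \<le> \<nu> B"
  using fa_measure_Diff[OF assms] fa_measure_nonneg[OF assms(1), of "B - A"] assms(2,3) by auto

lemma fa_measure_UN:
  assumes "fa_measure M \<nu>" "finite I" "A ` I \<subseteq> sets M" "disjoint_family_on A I"
  shows "\<nu> (\<Union>i\<in>I. A i) = (\<Sum>i\<in>I. \<nu> (A i))"
  using assms(2-4)
proof (induction I rule: finite_induct)
  case empty
  then show ?case using fa_measure_empty[OF assms(1)] by simp
next
  case (insert i I)
  have "A i \<inter> (\<Union>j\<in>I. A j) = {}"
    using insert.prems(2) insert.hyps(2) by (auto simp: disjoint_family_on_def)
  then have "\<nu> (A i \<union> (\<Union>j\<in>I. A j)) = \<nu> (A i) + \<nu> (\<Union>j\<in>I. A j)"
    using insert by (intro fa_measure_Un[OF assms(1)]) auto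
  then show ?case
    using insert by (simp add: disjoint_family_on_mono[OF subset_insertI])
qed

lemma fa_measure_sum_scaled:
  assumes "\<And>k. k \<in> K \<Longrightarrow> fa_measure M (\<nu> k)" "\<And>k. k \<in> K \<Longrightarrow> 0 \<le> c k"
  shows "fa_measure M (\<lambda>E. \<Sum>k\<in>K. c k * \<nu> k E)"
  using assms
  by (auto simp: fa_measure_def additive_def sum.distrib distrib_left intro!: sum_nonneg)

lemma S_ba_fa_measure: "\<nu> \<in> S_ba M \<Longrightarrow> fa_measure M \<nu>"
  by (simp add: S_ba_def ba_def fa_measure_def additive_def)

lemma S_ba_space: "\<nu> \<in> S_ba M \<Longrightarrow> \<nu> (space M) = 1"
  by (simp add: S_ba_def)

lemma S_ba_outside: "\<nu> \<in> S_ba M \<Longrightarrow> E \<notin> sets M \<Longrightarrow> \<nu> E = 0"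
  by (simp add: S_ba_def ba_def)

lemma S_ba_range: "\<nu> \<in> S_ba M \<Longrightarrow> \<nu> E \<in> {0..1}"
  using fa_measure_mono[OF S_ba_fa_measure, of \<nu> M E "space M"] S_ba_space[of \<nu> M]
    fa_measure_nonneg[OF S_ba_fa_measure, of \<nu> M E] S_ba_outside[of \<nu> M E]
  by (cases "E \<in> sets M") (auto dest: sets.sets_into_space)

lemma S_baI:
  assumes "fa_measure M \<nu>" "\<nu> (space M) = 1" "\<And>E. E \<notin> sets M \<Longrightarrow> \<nu> E = 0"
  shows "\<nu> \<in> S_ba M"
proof -
  have "\<bar>\<nu> A\<bar> \<le> 1" if "A \<in> sets M" for A
    using fa_measure_mono[OF assms(1) that sets.top] fa_measure_nonneg[OF assms(1) that] assms(2)
      sets.sets_into_space[OF that] by auto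
  then show ?thesis
    using assms fa_measure_empty[OF assms(1)]
    by (auto simp: S_ba_def ba_def fa_measure_def additive_def)
qed

definition point_mass :: "'a measure \<Rightarrow> 'a \<Rightarrow> 'a set \<Rightarrow> real" where
  "point_mass M x E = (if E \<in> sets M then indicator E x else 0)"

lemma point_mass_S_ba: "x \<in> space M \<Longrightarrow> point_mass M x \<in> S_ba M"
  by (rule S_baI) (auto simp: point_mass_def fa_measure_def additive_def indicator_def)

lemma mean_measure_eq_sum_scaled: "mean_measure m \<mu> = (\<lambda>E. \<Sum>i<m. (1 / real m) * \<mu> i E)"
  by (simp add: mean_measure_def sum_divide_distrib)

lemma mean_measure_S_ba:
  assumes "0 < m" "\<And>i. i < m \<Longrightarrow> \<mu> i \<in> S_ba M"
  shows "mean_measure m \<mu> \<in> S_ba M"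
proof (rule S_baI)
  show "fa_measure M (mean_measure m \<mu>)"
    unfolding mean_measure_eq_sum_scaled using assms(2) S_ba_fa_measure
    by (intro fa_measure_sum_scaled) auto
  show "mean_measure m \<mu> (space M) = 1"
    using assms by (simp add: mean_measure_def S_ba_space)
  show "mean_measure m \<mu> E = 0" if "E \<notin> sets M" for E
    using assms(2) S_ba_outside[OF _ that] by (simp add: mean_measure_def sum.neutral)
qed

lemma le_mean_measure:
  assumes "\<And>j. j < m \<Longrightarrow> 0 \<le> \<mu> j E" "i < m"
  shows "\<mu> i E \<le> real m * mean_measure m \<mu> E"
  using member_le_sum[of i "{..<m}" "\<lambda>j. \<mu> j E"] assms by (simp add: mean_measure_def)

section \<open>Countable additivity\<close>

lemma countably_additive_on_iff_ennreal:
  assumes "\<And>A. A \<in> sets M \<Longrightarrow> 0 \<le> \<nu> A"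
  shows "countably_additive_on M \<nu> \<longleftrightarrow> countably_additive (sets M) (\<lambda>A. ennreal (\<nu> A))"
proof -
  have "(\<lambda>i. \<nu> (F i)) sums \<nu> (\<Union>i. F i) \<longleftrightarrow> (\<Sum>i. ennreal (\<nu> (F i))) = ennreal (\<nu> (\<Union>i. F i))"
    if "range F \<subseteq> sets M" for F :: "nat \<Rightarrow> 'a set"
  proof -
    have "(\<Union>i. F i) \<in> sets M" using that by auto
    then have "(\<lambda>i. \<nu> (F i)) sums \<nu> (\<Union>i. F i) \<longleftrightarrow> (\<lambda>i. ennreal (\<nu> (F i))) sums ennreal (\<nu> (\<Union>i. F i))"
      using that assms by (subst sums_ennreal) auto
    then show ?thesis by (auto simp: sums_iff)
  qed
  then show ?thesis
    by (auto simp: countably_additive_on_def countably_additive_def)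
qed

lemma countably_additive_on_fa_measure:
  assumes "countably_additive_on M \<nu>" "\<And>A. A \<in> sets M \<Longrightarrow> 0 \<le> \<nu> A"
  shows "fa_measure M \<nu>"
proof -
  have "countably_additive (sets M) (\<lambda>A. ennreal (\<nu> A))"
    using assms countably_additive_on_iff_ennreal by blast
  moreover have "positive (sets M) (\<lambda>A. ennreal (\<nu> A))"
  proof -
    have "(\<lambda>i. \<nu> {}) sums \<nu> (\<Union>i::nat. {})"
      using assms(1) by (auto simp: countably_additive_on_def disjoint_family_on_def)
    then show ?thesis by (simp add: positive_def sums_zero_iff_shift sums_iff summable_const_iff)
  qed
  ultimately have "additive (sets M) (\<lambda>A. ennreal (\<nu> A))"
    by (rule sets.countably_additive_additive[rotated])
  then show ?thesis
    using assms(2) by (auto simp: fa_measure_def additive_def simp flip: ennreal_plus)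
qed

lemma countably_additive_on_decseq_tendsto_0:
  assumes "countably_additive_on M \<nu>" "\<And>A. A \<in> sets M \<Longrightarrow> 0 \<le> \<nu> A"
    and "range G \<subseteq> sets M" "decseq G" "(\<Inter>n. G n) = {}"
  shows "(\<lambda>n. \<nu> (G n)) \<longlonglongrightarrow> 0"
proof -
  have fa: "fa_measure M \<nu>" by (rule countably_additive_on_fa_measure[OF assms(1,2)])
  have ca: "countably_additive (sets M) (\<lambda>A. ennreal (\<nu> A))"
    using assms(1,2) countably_additive_on_iff_ennreal by blast
  have G0: "(\<Union>n. G 0 - G n) = G 0"
    using assms(5) by auto
  have cont: "\<forall>A. range A \<subseteq> sets M \<longrightarrow> incseq A \<longrightarrow> (\<lambda>i. \<nu> (A i)) \<longlonglongrightarrow> \<nu> (\<Union>i. A i)"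
    using ca sets.countably_additive_iff_continuous_from_below[of M "\<lambda>A. ennreal (\<nu> A)"]
      fa_measure_empty[OF fa] assms(2)
    by (auto simp: positive_def additive_def fa_measure_Un[OF fa] fa_measure_nonneg[OF fa]
        simp flip: ennreal_plus)
  have "(\<lambda>n. \<nu> (G 0 - G n)) \<longlonglongrightarrow> \<nu> (\<Union>n. G 0 - G n)"
  proof (intro cont[rule_format])
    show "range (\<lambda>n. G 0 - G n) \<subseteq> sets M" using assms(3) by auto
    show "incseq (\<lambda>n. G 0 - G n)" using assms(4) by (auto simp: incseq_def decseq_def)
  qed
  then have lim: "(\<lambda>n. \<nu> (G 0 - G n)) \<longlonglongrightarrow> \<nu> (G 0)"
    using G0 by simp
  have "(\<lambda>n. \<nu> (G 0) - \<nu> (G 0 - G n)) \<longlonglongrightarrow> 0"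
    using tendsto_diff[OF tendsto_const lim, of "\<nu> (G 0)"] by simp
  moreover have "\<nu> (G 0) - \<nu> (G 0 - G n) = \<nu> (G n)" for n
    using fa_measure_Diff[OF fa, of "G n" "G 0"] assms(3) decseqD[OF assms(4), of 0 n] by auto
  ultimately show ?thesis by simp
qed

lemma countably_additive_onI_decseq:
  assumes "fa_measure M \<nu>"
    and "\<And>G. range G \<subseteq> sets M \<Longrightarrow> decseq G \<Longrightarrow> (\<Inter>n. G n) = {} \<Longrightarrow> (\<lambda>n. \<nu> (G n)) \<longlonglongrightarrow> 0"
  shows "countably_additive_on M \<nu>"
proof -
  have "countably_additive (sets M) (\<lambda>A. ennreal (\<nu> A))"
  proof (rule sets.empty_continuous_imp_countably_additive)
    show "positive (sets M) (\<lambda>A. ennreal (\<nu> A))"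
      using fa_measure_empty[OF assms(1)] by (simp add: positive_def)
    show "additive (sets M) (\<lambda>A. ennreal (\<nu> A))"
      using assms(1) by (auto simp: additive_def fa_measure_Un fa_measure_nonneg simp flip: ennreal_plus)
  qed (use assms(2) in \<open>auto simp flip: ennreal_0\<close>)
  then show ?thesis
    using countably_additive_on_iff_ennreal fa_measure_nonneg[OF assms(1)] by blast
qed

lemma countably_additive_on_dominated:
  assumes "fa_measure M \<nu>" "countably_additive_on M \<rho>" "\<And>A. A \<in> sets M \<Longrightarrow> 0 \<le> \<rho> A"
    and "\<And>A. A \<in> sets M \<Longrightarrow> \<nu> A \<le> c * \<rho> A"
  shows "countably_additive_on M \<nu>"
proof (rule countably_additive_onI_decseq[OF assms(1)])
  fix G assume G: "range G \<subseteq> sets M" "decseq G" "(\<Inter>n. G n) = {}"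
  have "(\<lambda>n. c * \<rho> (G n)) \<longlonglongrightarrow> c * 0"
    using countably_additive_on_decseq_tendsto_0[OF assms(2,3) G] by (rule tendsto_mult_left)
  then have lim: "(\<lambda>n. c * \<rho> (G n)) \<longlonglongrightarrow> 0" by simp
  have "0 \<le> \<nu> (G n)" "\<nu> (G n) \<le> c * \<rho> (G n)" for n
    using G(1) fa_measure_nonneg[OF assms(1)] assms(4) by auto
  then show "(\<lambda>n. \<nu> (G n)) \<longlonglongrightarrow> 0"
    using tendsto_sandwich[OF _ _ tendsto_const lim, of "\<lambda>n. \<nu> (G n)"] by simp
qed

lemma point_mass_countably_additive: "countably_additive_on M (point_mass M x)"
proof -
  have "countably_additive (sets M) (\<lambda>A. ennreal (point_mass M x A))"
    by (auto simp: countably_additive_def point_mass_def ennreal_indicator suminf_indicator)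
  then show ?thesis
    by (subst countably_additive_on_iff_ennreal) (auto simp: point_mass_def)
qed

lemma mean_measure_countably_additive:
  assumes "\<And>i. i < m \<Longrightarrow> countably_additive_on M (\<mu> i)"
  shows "countably_additive_on M (mean_measure m \<mu>)"
  unfolding countably_additive_on_def mean_measure_def
proof (intro allI impI)
  fix F :: "nat \<Rightarrow> 'a set" assume "range F \<subseteq> sets M" "disjoint_family F"
  then have "(\<lambda>n. \<mu> i (F n)) sums \<mu> i (\<Union>n. F n)" if "i \<in> {..<m}" for i
    using assms that by (auto simp: countably_additive_on_def)
  then have "(\<lambda>n. \<Sum>i<m. \<mu> i (F n)) sums (\<Sum>i<m. \<mu> i (\<Union>n. F n))"
    by (rule sums_sum)
  then show "(\<lambda>n. (\<Sum>i<m. \<mu> i (F n)) / real m) sums ((\<Sum>i<m. \<mu> i (\<Union>n. F n)) / real m)"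
    by (rule sums_divide)
qed

lemma countably_additive_on_mean_measure_component:
  assumes "\<And>j. j < m \<Longrightarrow> \<mu> j \<in> S_ba M" "countably_additive_on M (mean_measure m \<mu>)" "i < m"
  shows "countably_additive_on M (\<mu> i)"
proof (rule countably_additive_on_dominated[OF _ assms(2)])
  have "mean_measure m \<mu> \<in> S_ba M"
    using assms(1,3) by (intro mean_measure_S_ba) auto
  from S_ba_range[OF this] show "0 \<le> mean_measure m \<mu> A" for A
    by simp
  show "fa_measure M (\<mu> i)"
    using assms(1,3) by (simp add: S_ba_fa_measure)
  show "\<mu> i A \<le> real m * mean_measure m \<mu> A" for A
    using assms(1,3) S_ba_range by (intro le_mean_measure) auto
qed

section \<open>Integration against finitely additive measures\<close>

definition lower_sum :: "'a set set \<Rightarrow> ('a set \<Rightarrow> real) \<Rightarrow> ('a \<Rightarrow> real) \<Rightarrow> real" where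
  "lower_sum P \<nu> f = (\<Sum>B\<in>P. (INF x\<in>B. f x) * \<nu> B)"

definition upper_sum :: "'a set set \<Rightarrow> ('a set \<Rightarrow> real) \<Rightarrow> ('a \<Rightarrow> real) \<Rightarrow> real" where
  "upper_sum P \<nu> f = (\<Sum>B\<in>P. (SUP x\<in>B. f x) * \<nu> B)"

definition riemann_sum :: "'a set set \<Rightarrow> ('a set \<Rightarrow> real) \<Rightarrow> ('a \<Rightarrow> real) \<Rightarrow> real" where
  "riemann_sum P \<nu> f = (\<Sum>B\<in>P. f (SOME x. x \<in> B) * \<nu> B)"

definition fine_for :: "'a set set \<Rightarrow> ('a \<Rightarrow> real) \<Rightarrow> real \<Rightarrow> bool" where
  "fine_for P f \<delta> \<longleftrightarrow> (\<forall>B\<in>P. \<forall>x\<in>B. \<forall>y\<in>B. \<bar>f x - f y\<bar> < \<delta>)"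

lemma fa_integral_eq_SUP_lower_sum: "fa_integral M \<nu> f = (SUP P\<in>fa_partitions M. lower_sum P \<nu> f)"
  by (simp add: fa_integral_def lower_sum_def)

lemma fa_partitionsD:
  assumes "P \<in> fa_partitions M"
  shows "finite P" "\<Union>P = space M" "disjoint P"
    and "B \<in> P \<Longrightarrow> B \<in> sets M" "B \<in> P \<Longrightarrow> B \<noteq> {}" "B \<in> P \<Longrightarrow> B \<subseteq> space M"
  using assms by (auto simp: fa_partitions_def)

lemma fa_partitions_nonempty: "fa_partitions M \<noteq> {}"
proof (cases "space M = {}")
  case True
  then have "{} \<in> fa_partitions M" by (simp add: fa_partitions_def)
  then show ?thesis by blast
next
  case False
  then have "{space M} \<in> fa_partitions M" by (simp add: fa_partitions_def)
  then show ?thesis by blast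
qed

lemma some_in_partition_block: "P \<in> fa_partitions M \<Longrightarrow> B \<in> P \<Longrightarrow> (SOME x. x \<in> B) \<in> B"
  using fa_partitionsD(5) by (metis some_in_eq)

lemma fa_measure_partition:
  assumes "fa_measure M \<nu>" "P \<in> fa_partitions M" "E \<in> sets M"
  shows "\<nu> E = (\<Sum>B\<in>P. \<nu> (E \<inter> B))"
proof -
  have "E = (\<Union>B\<in>P. E \<inter> B)"
    using fa_partitionsD(2)[OF assms(2)] sets.sets_into_space[OF assms(3)] by auto
  moreover have "disjoint_family_on (\<lambda>B. E \<inter> B) P"
    using fa_partitionsD(3)[OF assms(2)] by (auto simp: disjoint_family_on_def disjoint_def)
  ultimately show ?thesis
    using fa_measure_UN[OF assms(1) fa_partitionsD(1)[OF assms(2)], of "\<lambda>B. E \<inter> B"]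
      fa_partitionsD(4)[OF assms(2)] assms(3) by auto
qed

lemma fa_measure_partition_space:
  assumes "fa_measure M \<nu>" "P \<in> fa_partitions M"
  shows "\<nu> (space M) = (\<Sum>B\<in>P. \<nu> B)"
  using fa_measure_partition[OF assms sets.top] fa_partitionsD(6)[OF assms(2)]
  by (simp add: Int_absorb1)

lemma INF_block_le:
  fixes f :: "'a \<Rightarrow> real"
  assumes "bounded (f ` space M)" "B \<subseteq> space M" "x \<in> B"
  shows "(INF y\<in>B. f y) \<le> f x"
proof -
  have "bounded (f ` B)" using assms(1,2) by (meson bounded_subset image_mono)
  then show ?thesis using assms(3) by (intro cINF_lower bounded_imp_bdd_below)
qed

lemma le_SUP_block:
  fixes f :: "'a \<Rightarrow> real"
  assumes "bounded (f ` space M)" "B \<subseteq> space M" "x \<in> B"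
  shows "f x \<le> (SUP y\<in>B. f y)"
proof -
  have "bounded (f ` B)" using assms(1,2) by (meson bounded_subset image_mono)
  then show ?thesis using assms(3) by (intro cSUP_upper bounded_imp_bdd_above)
qed

lemma lower_sum_le_upper_sum:
  assumes "fa_measure M \<nu>" "bounded (f ` space M)" "P \<in> fa_partitions M" "Q \<in> fa_partitions M"
  shows "lower_sum Q \<nu> f \<le> upper_sum P \<nu> f"
proof -
  have "lower_sum Q \<nu> f = (\<Sum>C\<in>Q. \<Sum>B\<in>P. (INF x\<in>C. f x) * \<nu> (C \<inter> B))"
    unfolding lower_sum_def
    using fa_measure_partition[OF assms(1,3)] fa_partitionsD(4)[OF assms(4)]
    by (simp add: sum_distrib_left)
  also have "\<dots> \<le> (\<Sum>C\<in>Q. \<Sum>B\<in>P. (SUP x\<in>B. f x) * \<nu> (C \<inter> B))"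
  proof (intro sum_mono)
    fix C B assume C: "C \<in> Q" and B: "B \<in> P"
    show "(INF x\<in>C. f x) * \<nu> (C \<inter> B) \<le> (SUP x\<in>B. f x) * \<nu> (C \<inter> B)"
    proof (cases "C \<inter> B = {}")
      case True
      then show ?thesis using fa_measure_empty[OF assms(1)] by simp
    next
      case False
      then obtain y where "y \<in> C" "y \<in> B" by blast
      then have "(INF x\<in>C. f x) \<le> (SUP x\<in>B. f x)"
        using INF_block_le[OF assms(2) fa_partitionsD(6)[OF assms(4) C]]
          le_SUP_block[OF assms(2) fa_partitionsD(6)[OF assms(3) B]] by (meson order_trans)
      moreover have "0 \<le> \<nu> (C \<inter> B)"
        using fa_partitionsD(4)[OF assms(3) B] fa_partitionsD(4)[OF assms(4) C]
        by (intro fa_measure_nonneg[OF assms(1)]) auto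
      ultimately show ?thesis by (rule mult_right_mono)
    qed
  qed
  also have "\<dots> = upper_sum P \<nu> f"
    unfolding upper_sum_def
    using fa_measure_partition[OF assms(1,4)] fa_partitionsD(4)[OF assms(3)]
    by (subst sum.swap) (simp add: sum_distrib_left Int_commute)
  finally show ?thesis .
qed

lemma lower_sum_le_fa_integral:
  assumes "fa_measure M \<nu>" "bounded (f ` space M)" "P \<in> fa_partitions M"
  shows "lower_sum P \<nu> f \<le> fa_integral M \<nu> f"
  unfolding fa_integral_eq_SUP_lower_sum
  using assms(3) lower_sum_le_upper_sum[OF assms(1,2,3)]
  by (intro cSUP_upper bdd_aboveI2) auto

lemma fa_integral_le_upper_sum:
  assumes "fa_measure M \<nu>" "bounded (f ` space M)" "P \<in> fa_partitions M"
  shows "fa_integral M \<nu> f \<le> upper_sum P \<nu> f"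
  unfolding fa_integral_eq_SUP_lower_sum
  using lower_sum_le_upper_sum[OF assms(1,2,3)]
  by (intro cSUP_least fa_partitions_nonempty)

lemma riemann_sum_between:
  assumes "fa_measure M \<nu>" "bounded (f ` space M)" "P \<in> fa_partitions M"
  shows "lower_sum P \<nu> f \<le> riemann_sum P \<nu> f" "riemann_sum P \<nu> f \<le> upper_sum P \<nu> f"
proof -
  have "(INF x\<in>B. f x) \<le> f (SOME x. x \<in> B)" "f (SOME x. x \<in> B) \<le> (SUP x\<in>B. f x)"
    and "0 \<le> \<nu> B" if "B \<in> P" for B
    using INF_block_le[OF assms(2)] le_SUP_block[OF assms(2)] some_in_partition_block[OF assms(3) that]
      fa_partitionsD(4,6)[OF assms(3) that] fa_measure_nonneg[OF assms(1)] by auto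
  then show "lower_sum P \<nu> f \<le> riemann_sum P \<nu> f" "riemann_sum P \<nu> f \<le> upper_sum P \<nu> f"
    unfolding lower_sum_def upper_sum_def riemann_sum_def
    by (auto intro!: sum_mono mult_right_mono)
qed

lemma upper_sum_le_lower_sum:
  assumes "fa_measure M \<nu>" "P \<in> fa_partitions M" "fine_for P f \<delta>"
  shows "upper_sum P \<nu> f \<le> lower_sum P \<nu> f + \<delta> * \<nu> (space M)"
proof -
  have "(SUP x\<in>B. f x) \<le> (INF x\<in>B. f x) + \<delta>" if B: "B \<in> P" for B
  proof -
    have "f y - \<delta> \<le> f x" if "x \<in> B" "y \<in> B" for x y
      using assms(3) B that by (force simp: fine_for_def)
    then have "f y - \<delta> \<le> (INF x\<in>B. f x)" if "y \<in> B" for y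
      using fa_partitionsD(5)[OF assms(2) B] that by (intro cINF_greatest) auto
    then show ?thesis
      using fa_partitionsD(5)[OF assms(2) B] by (intro cSUP_least) (auto simp: algebra_simps)
  qed
  then have "upper_sum P \<nu> f \<le> (\<Sum>B\<in>P. ((INF x\<in>B. f x) + \<delta>) * \<nu> B)"
    unfolding upper_sum_def
    using fa_partitionsD(4)[OF assms(2)] fa_measure_nonneg[OF assms(1)]
    by (intro sum_mono mult_right_mono) auto
  also have "\<dots> = lower_sum P \<nu> f + \<delta> * \<nu> (space M)"
    by (simp add: lower_sum_def fa_measure_partition_space[OF assms(1,2)]
        distrib_right sum.distrib sum_distrib_left)
  finally show ?thesis .
qed

lemma fa_integral_riemann_sum_approx:
  assumes "fa_measure M \<nu>" "bounded (f ` space M)" "P \<in> fa_partitions M" "fine_for P f \<delta>"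
  shows "\<bar>fa_integral M \<nu> f - riemann_sum P \<nu> f\<bar> \<le> \<delta> * \<nu> (space M)"
  using lower_sum_le_fa_integral[OF assms(1-3)] fa_integral_le_upper_sum[OF assms(1-3)]
    riemann_sum_between[OF assms(1-3)] upper_sum_le_lower_sum[OF assms(1,3,4)]
  by linarith

lemma riemann_sum_diff_le:
  assumes "P \<in> fa_partitions M" "\<And>x. x \<in> space M \<Longrightarrow> \<bar>f x\<bar> \<le> 1"
  shows "\<bar>riemann_sum P \<nu> f - riemann_sum P \<rho> f\<bar> \<le> (\<Sum>B\<in>P. \<bar>\<nu> B - \<rho> B\<bar>)"
proof -
  have "\<bar>f (SOME x. x \<in> B) * (\<nu> B - \<rho> B)\<bar> \<le> \<bar>\<nu> B - \<rho> B\<bar>" if "B \<in> P" for B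
    using assms(2) some_in_partition_block[OF assms(1) that] fa_partitionsD(6)[OF assms(1) that]
    by (auto simp: abs_mult intro!: mult_left_le_one_le)
  then show ?thesis
    unfolding riemann_sum_def sum_subtractf[symmetric] right_diff_distrib[symmetric]
    by (rule order_trans[OF sum_abs sum_mono])
qed

lemma fibers_in_fa_partitions:
  assumes "finite (\<kappa> ` space M)" "\<And>k. {x \<in> space M. \<kappa> x = k} \<in> sets M"
  shows "(\<lambda>k. {x \<in> space M. \<kappa> x = k}) ` \<kappa> ` space M \<in> fa_partitions M"
  using assms by (auto simp: fa_partitions_def disjoint_def)

lemma finite_floor_divide_image:
  fixes f :: "'a \<Rightarrow> real"
  assumes "bounded (f ` S)" "0 < \<delta>"
  shows "finite ((\<lambda>x. \<lfloor>f x / \<delta>\<rfloor>) ` S)"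
proof -
  obtain c where c: "\<And>x. x \<in> S \<Longrightarrow> \<bar>f x\<bar> \<le> c"
    using assms(1) by (auto simp: bounded_real)
  have "\<lfloor>f x / \<delta>\<rfloor> \<in> {\<lfloor>- c / \<delta>\<rfloor>..\<lfloor>c / \<delta>\<rfloor>}" if "x \<in> S" for x
  proof -
    have "- c / \<delta> \<le> f x / \<delta>" "f x / \<delta> \<le> c / \<delta>"
      using c[OF that] assms(2) by (simp_all add: abs_le_iff field_simps)
    then show ?thesis by (auto intro: floor_mono)
  qed
  then show ?thesis
    by (intro finite_subset[OF _ finite_atLeastAtMost_int[of "\<lfloor>- c / \<delta>\<rfloor>" "\<lfloor>c / \<delta>\<rfloor>"]]) auto
qed

lemma same_floor_divide_imp_close:
  fixes a b \<delta> :: real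
  assumes "\<lfloor>a / \<delta>\<rfloor> = \<lfloor>b / \<delta>\<rfloor>" "0 < \<delta>"
  shows "\<bar>a - b\<bar> < \<delta>"
proof -
  have "\<bar>a / \<delta> - b / \<delta>\<bar> < 1"
    using assms(1) floor_correct[of "a / \<delta>"] floor_correct[of "b / \<delta>"] by linarith
  then show ?thesis
    using assms(2) by (simp add: diff_divide_distrib[symmetric] abs_divide)
qed

lemma common_fine_partition_exists:
  fixes f g :: "'a \<Rightarrow> real"
  assumes "f \<in> borel_measurable M" "bounded (f ` space M)"
    and "g \<in> borel_measurable M" "bounded (g ` space M)" "0 < \<delta>"
  shows "\<exists>P\<in>fa_partitions M. fine_for P f \<delta> \<and> fine_for P g \<delta>"
proof -
  define \<kappa> where "\<kappa> x = (\<lfloor>f x / \<delta>\<rfloor>, \<lfloor>g x / \<delta>\<rfloor>)" for x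
  define P where "P = (\<lambda>k. {x \<in> space M. \<kappa> x = k}) ` \<kappa> ` space M"
  have "\<kappa> ` space M \<subseteq> (\<lambda>x. \<lfloor>f x / \<delta>\<rfloor>) ` space M \<times> (\<lambda>x. \<lfloor>g x / \<delta>\<rfloor>) ` space M"
    by (auto simp: \<kappa>_def)
  then have "finite (\<kappa> ` space M)"
    using finite_floor_divide_image[OF assms(2,5)] finite_floor_divide_image[OF assms(4,5)]
    by (meson finite_SigmaI finite_subset)
  moreover have "{x \<in> space M. \<kappa> x = k} \<in> sets M" for k
    using assms(1,3) by (cases k) (simp add: \<kappa>_def)
  ultimately have "P \<in> fa_partitions M"
    unfolding P_def by (rule fibers_in_fa_partitions)
  moreover have "fine_for P f \<delta> \<and> fine_for P g \<delta>"
    using same_floor_divide_imp_close[OF _ assms(5)] by (auto simp: fine_for_def P_def \<kappa>_def)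
  ultimately show ?thesis by blast
qed

lemma fine_partition_exists:
  fixes f :: "'a \<Rightarrow> real"
  assumes "f \<in> borel_measurable M" "bounded (f ` space M)" "0 < \<delta>"
  obtains P where "P \<in> fa_partitions M" "fine_for P f \<delta>"
  using common_fine_partition_exists[OF assms(1,2) assms] by blast

lemma le_if_le_add_all_pos:
  fixes a b K :: real
  assumes "\<And>\<delta>. 0 < \<delta> \<Longrightarrow> a \<le> b + \<delta> * K"
  shows "a \<le> b"
proof (rule field_le_epsilon)
  fix e :: real assume "0 < e"
  define \<delta> where "\<delta> = e / (\<bar>K\<bar> + 1)"
  have "0 < \<delta>" using \<open>0 < e\<close> by (simp add: \<delta>_def)
  have "\<delta> * K \<le> \<delta> * (\<bar>K\<bar> + 1)"
    using \<open>0 < \<delta>\<close> by (intro mult_left_mono) auto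
  also have "\<dots> = e" by (simp add: \<delta>_def)
  finally show "a \<le> b + e" using assms[OF \<open>0 < \<delta>\<close>] by simp
qed

lemma eq_if_abs_diff_le_all_pos:
  fixes a b K :: real
  assumes "\<And>\<delta>. 0 < \<delta> \<Longrightarrow> \<bar>a - b\<bar> \<le> \<delta> * K"
  shows "a = b"
  using le_if_le_add_all_pos[of a b K] le_if_le_add_all_pos[of b a K] assms
  by (force simp: abs_le_iff)

lemma fa_integral_cong:
  assumes "\<And>x. x \<in> space M \<Longrightarrow> f x = g x"
  shows "fa_integral M \<nu> f = fa_integral M \<nu> g"
  unfolding fa_integral_def
  using assms fa_partitionsD(6) by (intro SUP_cong sum.cong arg_cong2[where f = times] INF_cong) blast+

lemma fa_integral_const:
  assumes "fa_measure M \<nu>"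
  shows "fa_integral M \<nu> (\<lambda>_. c) = c * \<nu> (space M)"
proof (rule eq_if_abs_diff_le_all_pos)
  fix \<delta> :: real assume "0 < \<delta>"
  obtain P where P: "P \<in> fa_partitions M" "fine_for P (\<lambda>_. c) \<delta>"
    using fa_partitions_nonempty \<open>0 < \<delta>\<close> by (force simp: fine_for_def)
  have "riemann_sum P \<nu> (\<lambda>_. c) = c * \<nu> (space M)"
    by (simp add: riemann_sum_def fa_measure_partition_space[OF assms P(1)] sum_distrib_left)
  moreover have "bounded ((\<lambda>_. c) ` space M)"
    by (simp add: image_constant_conv)
  ultimately show "\<bar>fa_integral M \<nu> (\<lambda>_. c) - c * \<nu> (space M)\<bar> \<le> \<delta> * \<nu> (space M)"
    using fa_integral_riemann_sum_approx[OF assms _ P] by simp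
qed

lemma fa_integral_add:
  fixes f g :: "'a \<Rightarrow> real"
  assumes \<nu>: "fa_measure M \<nu>"
    and f: "f \<in> borel_measurable M" "bounded (f ` space M)"
    and g: "g \<in> borel_measurable M" "bounded (g ` space M)"
  shows "fa_integral M \<nu> (\<lambda>x. f x + g x) = fa_integral M \<nu> f + fa_integral M \<nu> g"
proof (rule eq_if_abs_diff_le_all_pos)
  fix \<delta> :: real assume "0 < \<delta>"
  then obtain P where P: "P \<in> fa_partitions M" "fine_for P f \<delta>" "fine_for P g \<delta>"
    using common_fine_partition_exists[OF f g] by blast
  have "fine_for P (\<lambda>x. f x + g x) (2 * \<delta>)"
    using P(2,3) unfolding fine_for_def by (smt (verit, best))
  moreover have "bounded ((\<lambda>x. f x + g x) ` space M)"
    using f(2) g(2) by (rule bounded_plus_comp)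
  ultimately have "\<bar>fa_integral M \<nu> (\<lambda>x. f x + g x) - riemann_sum P \<nu> (\<lambda>x. f x + g x)\<bar>
      \<le> 2 * \<delta> * \<nu> (space M)"
    using fa_integral_riemann_sum_approx[OF \<nu> _ P(1)] by blast
  moreover have "riemann_sum P \<nu> (\<lambda>x. f x + g x) = riemann_sum P \<nu> f + riemann_sum P \<nu> g"
    by (simp add: riemann_sum_def distrib_right sum.distrib)
  ultimately show "\<bar>fa_integral M \<nu> (\<lambda>x. f x + g x) - (fa_integral M \<nu> f + fa_integral M \<nu> g)\<bar>
      \<le> \<delta> * (4 * \<nu> (space M))"
    using fa_integral_riemann_sum_approx[OF \<nu> f(2) P(1,2)]
      fa_integral_riemann_sum_approx[OF \<nu> g(2) P(1,3)] by (simp add: abs_le_iff)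
qed

lemma fa_integral_mono:
  fixes f g :: "'a \<Rightarrow> real"
  assumes \<nu>: "fa_measure M \<nu>"
    and f: "f \<in> borel_measurable M" "bounded (f ` space M)"
    and g: "g \<in> borel_measurable M" "bounded (g ` space M)"
    and le: "\<And>x. x \<in> space M \<Longrightarrow> f x \<le> g x"
  shows "fa_integral M \<nu> f \<le> fa_integral M \<nu> g"
proof (rule le_if_le_add_all_pos)
  fix \<delta> :: real assume "0 < \<delta>"
  then obtain P where P: "P \<in> fa_partitions M" "fine_for P f \<delta>" "fine_for P g \<delta>"
    using common_fine_partition_exists[OF f g] by blast
  have "riemann_sum P \<nu> f \<le> riemann_sum P \<nu> g"
    unfolding riemann_sum_def
  proof (rule sum_mono)
    fix B assume B: "B \<in> P"
    have "f (SOME x. x \<in> B) \<le> g (SOME x. x \<in> B)"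
      using le some_in_partition_block[OF P(1) B] fa_partitionsD(6)[OF P(1) B] by blast
    then show "f (SOME x. x \<in> B) * \<nu> B \<le> g (SOME x. x \<in> B) * \<nu> B"
      using fa_measure_nonneg[OF \<nu> fa_partitionsD(4)[OF P(1) B]] by (rule mult_right_mono)
  qed
  then show "fa_integral M \<nu> f \<le> fa_integral M \<nu> g + \<delta> * (2 * \<nu> (space M))"
    using fa_integral_riemann_sum_approx[OF \<nu> f(2) P(1,2)]
      fa_integral_riemann_sum_approx[OF \<nu> g(2) P(1,3)] by (simp add: abs_le_iff)
qed

lemma fa_integral_indicator:
  assumes \<nu>: "fa_measure M \<nu>" and H: "H \<in> sets M"
  shows "fa_integral M \<nu> (indicator H) = \<nu> H"
proof (rule eq_if_abs_diff_le_all_pos)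
  fix \<delta> :: real assume "0 < \<delta>"
  have bounded: "bounded (indicator H ` space M :: real set)"
    by (auto simp: bounded_real indicator_def intro!: exI[of _ 1])
  obtain P where P: "P \<in> fa_partitions M" "fine_for P (indicator H) (min \<delta> 1)"
    using fine_partition_exists[of "indicator H" M "min \<delta> 1"] H bounded \<open>0 < \<delta>\<close> by auto
  have blocks: "B \<subseteq> H \<or> B \<inter> H = {}" if "B \<in> P" for B
    using P(2) that unfolding fine_for_def by (fastforce simp: indicator_def)
  have "riemann_sum P \<nu> (indicator H) = (\<Sum>B\<in>P. \<nu> (H \<inter> B))"
    unfolding riemann_sum_def
  proof (rule sum.cong[OF refl])
    fix B assume B: "B \<in> P"
    consider "B \<subseteq> H" | "B \<inter> H = {}" using blocks[OF B] by blast
    then show "indicator H (SOME x. x \<in> B) * \<nu> B = \<nu> (H \<inter> B)"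
    proof cases
      case 1
      then have "H \<inter> B = B" by blast
      then show ?thesis using 1 some_in_partition_block[OF P(1) B] by auto
    next
      case 2
      then have "H \<inter> B = {}" "(SOME x. x \<in> B) \<notin> H" using some_in_partition_block[OF P(1) B] by blast+
      then show ?thesis using fa_measure_empty[OF \<nu>] by simp
    qed
  qed
  also have "\<dots> = \<nu> H"
    using fa_measure_partition[OF \<nu> P(1) H] by simp
  finally show "\<bar>fa_integral M \<nu> (indicator H) - \<nu> H\<bar> \<le> \<delta> * \<nu> (space M)"
    using fa_integral_riemann_sum_approx[OF \<nu> bounded P(1), of \<delta>] P(2)
    by (force simp: fine_for_def)
qed

lemma fa_integral_sum_scaled_measures:
  fixes f :: "'a \<Rightarrow> real"
  assumes "finite K" "\<And>k. k \<in> K \<Longrightarrow> fa_measure M (\<nu> k)" "\<And>k. k \<in> K \<Longrightarrow> 0 \<le> c k"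
    and f: "f \<in> borel_measurable M" "bounded (f ` space M)"
  shows "fa_integral M (\<lambda>E. \<Sum>k\<in>K. c k * \<nu> k E) f = (\<Sum>k\<in>K. c k * fa_integral M (\<nu> k) f)"
proof (rule eq_if_abs_diff_le_all_pos)
  define \<rho> where "\<rho> = (\<lambda>E. \<Sum>k\<in>K. c k * \<nu> k E)"
  have \<rho>: "fa_measure M \<rho>"
    unfolding \<rho>_def using assms(2,3) by (rule fa_measure_sum_scaled)
  fix \<delta> :: real assume "0 < \<delta>"
  then obtain P where P: "P \<in> fa_partitions M" "fine_for P f \<delta>"
    using fine_partition_exists[OF f] by blast
  have "riemann_sum P \<rho> f = (\<Sum>B\<in>P. \<Sum>k\<in>K. c k * (f (SOME x. x \<in> B) * \<nu> k B))"
    unfolding riemann_sum_def \<rho>_def by (simp add: sum_distrib_left mult.left_commute)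
  also have "\<dots> = (\<Sum>k\<in>K. c k * riemann_sum P (\<nu> k) f)"
    unfolding riemann_sum_def sum_distrib_left by (rule sum.swap)
  finally have "riemann_sum P \<rho> f = (\<Sum>k\<in>K. c k * riemann_sum P (\<nu> k) f)" .
  moreover have "\<bar>c k * fa_integral M (\<nu> k) f - c k * riemann_sum P (\<nu> k) f\<bar> \<le> \<delta> * (c k * \<nu> k (space M))"
    if "k \<in> K" for k
    using mult_left_mono[OF fa_integral_riemann_sum_approx[OF assms(2)[OF that] f(2) P] assms(3)[OF that]]
    by (simp add: abs_mult assms(3)[OF that] right_diff_distrib[symmetric] mult.left_commute)
  then have "\<bar>(\<Sum>k\<in>K. c k * fa_integral M (\<nu> k) f) - (\<Sum>k\<in>K. c k * riemann_sum P (\<nu> k) f)\<bar>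
      \<le> \<delta> * \<rho> (space M)"
    unfolding \<rho>_def sum_subtractf[symmetric] sum_distrib_left
    by (rule order_trans[OF sum_abs sum_mono])
  ultimately show "\<bar>fa_integral M \<rho> f - (\<Sum>k\<in>K. c k * fa_integral M (\<nu> k) f)\<bar> \<le> \<delta> * (2 * \<rho> (space M))"
    using fa_integral_riemann_sum_approx[OF \<rho> f(2) P] by (simp add: abs_le_iff)
qed

section \<open>The Markov operator\<close>

lemma transition_functionD:
  assumes "transition_function M p"
  shows "\<And>E. E \<in> sets M \<Longrightarrow> (\<lambda>x. p x E) \<in> borel_measurable M"
    and "\<And>x E. x \<in> space M \<Longrightarrow> E \<in> sets M \<Longrightarrow> 0 \<le> p x E"
    and "\<And>x E. x \<in> space M \<Longrightarrow> E \<in> sets M \<Longrightarrow> p x E \<le> 1"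
    and "\<And>x. x \<in> space M \<Longrightarrow> p x (space M) = 1"
    and "\<And>x. x \<in> space M \<Longrightarrow> countably_additive_on M (p x)"
  using assms by (auto simp: transition_function_def)

lemma transition_function_bounded:
  assumes "transition_function M p" "E \<in> sets M"
  shows "bounded ((\<lambda>x. p x E) ` space M)"
proof -
  have "\<bar>p x E\<bar> \<le> 1" if "x \<in> space M" for x
    using transition_functionD(2,3)[OF assms(1) that assms(2)] by simp
  then show ?thesis by (auto simp: bounded_real)
qed

lemma transition_function_fa_measure:
  assumes "transition_function M p" "x \<in> space M"
  shows "fa_measure M (p x)"
  using transition_functionD(2,5)[OF assms(1)] assms(2) by (intro countably_additive_on_fa_measure) auto

lemma markov_op_apply: "E \<in> sets M \<Longrightarrow> markov_op M p \<nu> E = fa_integral M \<nu> (\<lambda>x. p x E)"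
  by (simp add: markov_op_def)

lemma markov_op_S_ba:
  assumes p: "transition_function M p" and \<nu>: "\<nu> \<in> S_ba M"
  shows "markov_op M p \<nu> \<in> S_ba M"
proof (rule S_baI)
  note fa = S_ba_fa_measure[OF \<nu>]
  note meas = transition_functionD(1)[OF p] and bdd = transition_function_bounded[OF p]
  have "markov_op M p \<nu> (E \<union> F) = markov_op M p \<nu> E + markov_op M p \<nu> F"
    if EF: "E \<in> sets M" "F \<in> sets M" "E \<inter> F = {}" for E F
  proof -
    have "markov_op M p \<nu> (E \<union> F) = fa_integral M \<nu> (\<lambda>x. p x E + p x F)"
      unfolding markov_op_apply[OF sets.Un[OF EF(1,2)]]
      by (intro fa_integral_cong fa_measure_Un[OF transition_function_fa_measure[OF p]] EF)
    also have "\<dots> = markov_op M p \<nu> E + markov_op M p \<nu> F"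
      using EF by (simp add: fa_integral_add[OF fa meas bdd meas bdd] markov_op_apply)
    finally show ?thesis .
  qed
  moreover have "0 \<le> markov_op M p \<nu> E" if "E \<in> sets M" for E
    using fa_integral_mono[OF fa _ _ meas[OF that] bdd[OF that], of "\<lambda>_. 0"]
      fa_integral_const[OF fa, of 0] transition_functionD(2)[OF p _ that] that
    by (simp add: markov_op_apply image_constant_conv)
  ultimately show "fa_measure M (markov_op M p \<nu>)"
    by (simp add: fa_measure_def additive_def)
  show "markov_op M p \<nu> (space M) = 1"
    using fa_integral_const[OF fa, of 1] S_ba_space[OF \<nu>] transition_functionD(4)[OF p]
    by (simp add: markov_op_apply cong: fa_integral_cong)
qed (simp add: markov_op_def)

lemma markov_op_le_level_set:
  assumes p: "transition_function M p" and \<nu>: "\<nu> \<in> S_ba M" and E: "E \<in> sets M" and "0 \<le> \<eta>"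
  shows "markov_op M p \<nu> E \<le> \<eta> + \<nu> {y \<in> space M. \<eta> < p y E}"
proof -
  note fa = S_ba_fa_measure[OF \<nu>]
  define H where "H = {y \<in> space M. \<eta> < p y E}"
  have H: "H \<in> sets M"
    unfolding H_def using transition_functionD(1)[OF p E] by measurable
  have bounded: "bounded ((\<lambda>_. \<eta>) ` space M)" "bounded (indicator H ` space M :: real set)"
    by (simp add: image_constant_conv) (auto simp: bounded_real indicator_def intro!: exI[of _ 1])
  have "p y E \<le> \<eta> + indicator H y" if "y \<in> space M" for y
    using transition_functionD(3)[OF p that E] that \<open>0 \<le> \<eta>\<close> by (auto simp: H_def indicator_def)
  then have "markov_op M p \<nu> E \<le> fa_integral M \<nu> (\<lambda>y. \<eta> + indicator H y)"
    unfolding markov_op_apply[OF E] using H bounded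
    by (intro fa_integral_mono[OF fa transition_functionD(1)[OF p E] transition_function_bounded[OF p E]]
        bounded_plus_comp) auto
  also have "\<dots> = \<eta> + \<nu> H"
    using H bounded
    by (simp add: fa_integral_add[OF fa] fa_integral_const[OF fa] fa_integral_indicator[OF fa]
        S_ba_space[OF \<nu>])
  finally show ?thesis by (simp add: H_def)
qed

lemma level_sets_tendsto_0:
  assumes p: "transition_function M p" and \<nu>: "\<nu> \<in> S_ba M" "countably_additive_on M \<nu>"
    and G: "range G \<subseteq> sets M" "decseq G" "(\<Inter>n. G n) = {}" and "0 < \<eta>"
  shows "(\<lambda>n. \<nu> {y \<in> space M. \<eta> < p y (G n)}) \<longlonglongrightarrow> 0"
proof (rule countably_additive_on_decseq_tendsto_0[OF \<nu>(2)])
  have "(\<lambda>y. p y (G n)) \<in> borel_measurable M" for n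
    using G(1) by (intro transition_functionD(1)[OF p]) auto
  then have "{y \<in> space M. \<eta> < p y (G n)} \<in> sets M" for n
    by measurable
  then show "range (\<lambda>n. {y \<in> space M. \<eta> < p y (G n)}) \<subseteq> sets M"
    by auto
  have "p y (G n) \<le> p y (G m)" if "y \<in> space M" "m \<le> n" for y m n
    using G(1) decseqD[OF G(2) that(2)]
    by (intro fa_measure_mono[OF transition_function_fa_measure[OF p that(1)]]) auto
  then show "decseq (\<lambda>n. {y \<in> space M. \<eta> < p y (G n)})"
    unfolding decseq_def by (auto intro: less_le_trans)
  show "(\<Inter>n. {y \<in> space M. \<eta> < p y (G n)}) = {}"
  proof -
    have "(\<lambda>n. p y (G n)) \<longlonglongrightarrow> 0" if "y \<in> space M" for y
      using transition_functionD(2,5)[OF p that] G by (intro countably_additive_on_decseq_tendsto_0) auto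
    then have "\<exists>n. \<not> \<eta> < p y (G n)" if "y \<in> space M" for y
      using order_tendstoD(2)[OF _ \<open>0 < \<eta>\<close>] that
      by (metis (no_types, lifting) eventually_sequentially order.refl order.asym)
    then show ?thesis by blast
  qed
qed (use S_ba_range[OF \<nu>(1)] in auto)

lemma markov_op_countably_additive:
  assumes p: "transition_function M p" and \<nu>: "\<nu> \<in> S_ba M" "countably_additive_on M \<nu>"
  shows "countably_additive_on M (markov_op M p \<nu>)"
proof (rule countably_additive_onI_decseq[OF S_ba_fa_measure[OF markov_op_S_ba[OF p \<nu>(1)]]])
  fix G assume G: "range G \<subseteq> sets M" "decseq G" "(\<Inter>n. G n) = {}"
  show "(\<lambda>n. markov_op M p \<nu> (G n)) \<longlonglongrightarrow> 0"
  proof (rule LIMSEQ_I)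
    fix e :: real assume "0 < e"
    then obtain N where N: "\<And>n. N \<le> n \<Longrightarrow> norm (\<nu> {y \<in> space M. e / 2 < p y (G n)} - 0) < e / 2"
      using LIMSEQ_D[OF level_sets_tendsto_0[OF p \<nu> G, of "e / 2"], of "e / 2"] by auto
    have "norm (markov_op M p \<nu> (G n)) < e" if "N \<le> n" for n
      using markov_op_le_level_set[OF p \<nu>(1), of "G n" "e / 2"] N[OF that] G(1) \<open>0 < e\<close>
        S_ba_range[OF markov_op_S_ba[OF p \<nu>(1)], of "G n"] by auto
    then show "\<exists>N. \<forall>n\<ge>N. norm (markov_op M p \<nu> (G n) - 0) < e" by auto
  qed
qed

lemma markov_op_mean_measure:
  assumes p: "transition_function M p" and "\<And>i. i < m \<Longrightarrow> \<mu> i \<in> S_ba M"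
  shows "markov_op M p (mean_measure m \<mu>) = mean_measure m (\<lambda>i. markov_op M p (\<mu> i))"
proof
  fix E
  show "markov_op M p (mean_measure m \<mu>) E = mean_measure m (\<lambda>i. markov_op M p (\<mu> i)) E"
  proof (cases "E \<in> sets M")
    case True
    then show ?thesis
      unfolding mean_measure_eq_sum_scaled markov_op_apply[OF True] using assms(2)
      by (subst fa_integral_sum_scaled_measures)
        (auto simp: S_ba_fa_measure transition_functionD(1)[OF p] transition_function_bounded[OF p])
  qed (simp add: markov_op_def mean_measure_def)
qed

lemma markov_iterate_S_ba:
  assumes "transition_function M p" "q \<in> S_ba M"
  shows "(markov_op M p ^^ k) q \<in> S_ba M"
  by (induction k) (simp_all add: assms markov_op_S_ba)

lemma markov_iterate_countably_additive:
  assumes "transition_function M p" "q \<in> S_ba M" "countably_additive_on M q"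
  shows "countably_additive_on M ((markov_op M p ^^ k) q)"
  by (induction k) (simp_all add: assms markov_op_countably_additive markov_iterate_S_ba)

lemma cesaro_mean_asymptotically_invariant:
  assumes p: "transition_function M p" and q: "q \<in> S_ba M" and E: "E \<in> sets M"
  defines "\<nu> n \<equiv> mean_measure (Suc n) (\<lambda>k. (markov_op M p ^^ k) q)"
  shows "(\<lambda>n. markov_op M p (\<nu> n) E - \<nu> n E) \<longlonglongrightarrow> 0"
proof (rule Lim_null_comparison)
  let ?q = "\<lambda>k. (markov_op M p ^^ k) q E"
  have "norm (markov_op M p (\<nu> n) E - \<nu> n E) \<le> 1 / real (Suc n)" for n
  proof -
    have "markov_op M p (\<nu> n) E - \<nu> n E = (\<Sum>k<Suc n. ?q (Suc k) - ?q k) / real (Suc n)"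
      unfolding \<nu>_def markov_op_mean_measure[OF p markov_iterate_S_ba[OF p q]]
      by (simp add: mean_measure_def sum_subtractf diff_divide_distrib)
    also have "\<dots> = (?q (Suc n) - ?q 0) / real (Suc n)"
      by (simp only: sum_lessThan_telescope[of ?q])
    finally have "markov_op M p (\<nu> n) E - \<nu> n E = (?q (Suc n) - ?q 0) / real (Suc n)" .
    moreover have "\<bar>?q (Suc n) - ?q 0\<bar> \<le> 1"
      using S_ba_range[OF markov_iterate_S_ba[OF p q, of "Suc n"], of E] S_ba_range[OF q, of E]
      by auto
    ultimately show ?thesis
      by (simp add: abs_divide divide_right_mono)
  qed
  then show "\<forall>\<^sub>F n in sequentially. norm (markov_op M p (\<nu> n) E - \<nu> n E) \<le> 1 / real (Suc n)"
    by simp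
  show "(\<lambda>n. 1 / real (Suc n)) \<longlonglongrightarrow> 0"
    using LIMSEQ_inverse_real_of_nat by (simp add: inverse_eq_divide)
qed

lemma point_mass_cesaro_means:
  assumes p: "transition_function M p" and x: "x \<in> space M"
  defines "\<nu> n \<equiv> mean_measure (Suc n) (\<lambda>k. (markov_op M p ^^ k) (point_mass M x))"
  shows "\<nu> n \<in> S_ba M" "countably_additive_on M (\<nu> n)"
    and "F \<in> sets M \<Longrightarrow> (\<lambda>n. markov_op M p (\<nu> n) F - \<nu> n F) \<longlonglongrightarrow> 0"
  unfolding \<nu>_def using point_mass_S_ba[OF x] point_mass_countably_additive
  by (auto intro!: mean_measure_S_ba mean_measure_countably_additive cesaro_mean_asymptotically_invariant
      markov_iterate_S_ba[OF p] markov_iterate_countably_additive[OF p] p)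

section \<open>Almost invariant measures converge to the unique invariant one\<close>

(* g is a cluster point of the subsequence (nu n) (n in I) in the product topology. *)
definition setwise_cluster_point :: "(nat \<Rightarrow> 'b \<Rightarrow> real) \<Rightarrow> nat set \<Rightarrow> ('b \<Rightarrow> real) \<Rightarrow> bool" where
  "setwise_cluster_point \<nu> I g \<longleftrightarrow>
     (\<forall>Es \<delta> N. finite Es \<longrightarrow> 0 < \<delta> \<longrightarrow> (\<exists>n\<in>I. N \<le> n \<and> (\<forall>E\<in>Es. \<bar>\<nu> n E - g E\<bar> < \<delta>)))"

lemma setwise_cluster_pointD:
  assumes "setwise_cluster_point \<nu> I g" "finite Es" "0 < \<delta>"
  obtains n where "n \<in> I" "N \<le> n" "\<And>E. E \<in> Es \<Longrightarrow> \<bar>\<nu> n E - g E\<bar> < \<delta>"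
  using assms(1)[unfolded setwise_cluster_point_def, rule_format, OF assms(2,3), of N] that by blast

lemma closure_imp_close_on_finite:
  fixes g :: "'b \<Rightarrow> real"
  assumes "g \<in> closure S" "finite Es" "0 < \<delta>"
  shows "\<exists>h\<in>S. \<forall>E\<in>Es. \<bar>h E - g E\<bar> < \<delta>"
proof -
  define U where "U = {h :: 'b \<Rightarrow> real. \<forall>E\<in>Es. h (id E) \<in> ball (g E) \<delta>}"
  have "open U" unfolding U_def by (rule product_topology_basis'[OF assms(2)]) auto
  moreover have "g \<in> U" using assms(3) by (simp add: U_def)
  ultimately obtain h where "h \<in> U" "h \<in> S"
    using assms(1) open_Int_closure_eq_empty by blast
  then show ?thesis by (auto simp: U_def dist_real_def abs_minus_commute[of "g _"])
qed

lemma setwise_cluster_point_exists: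
  fixes \<nu> :: "nat \<Rightarrow> 'b \<Rightarrow> real"
  assumes "\<And>n E. \<nu> n E \<in> {0..1}" "infinite I"
  shows "\<exists>g. setwise_cluster_point \<nu> I g"
proof -
  define K where "K = PiE UNIV (\<lambda>_::'b. {0..1::real})"
  define T where "T N = \<nu> ` {n\<in>I. N \<le> n}" for N
  have "compactin (product_topology (\<lambda>_. euclidean) UNIV) K"
    unfolding K_def by (simp add: compactin_PiE)
  then have "compact K"
    by (simp add: euclidean_product_topology)
  then have "K \<inter> (\<Inter>N\<in>UNIV. closure (T N)) \<noteq> {}"
  proof (rule compact_imp_fip_image)
    fix Ns :: "nat set" assume "finite Ns"
    then obtain n where n: "n \<in> I" "Max (insert 0 Ns) \<le> n"
      using assms(2) by (meson infinite_nat_iff_unbounded_le)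
    then have "\<nu> n \<in> T N" if "N \<in> Ns" for N
      using \<open>finite Ns\<close> that by (force simp: T_def)
    then have "\<nu> n \<in> K \<inter> (\<Inter>N\<in>Ns. closure (T N))"
      using assms(1) closure_subset by (fastforce simp: K_def)
    then show "K \<inter> (\<Inter>N\<in>Ns. closure (T N)) \<noteq> {}" by blast
  qed auto
  then obtain g where g: "\<And>N. g \<in> closure (T N)" by blast
  have "setwise_cluster_point \<nu> I g"
    unfolding setwise_cluster_point_def
  proof (intro allI impI)
    fix Es :: "'b set" and \<delta> :: real and N assume "finite Es" "0 < \<delta>"
    then obtain h where "h \<in> T N" "\<forall>E\<in>Es. \<bar>h E - g E\<bar> < \<delta>"
      using closure_imp_close_on_finite[OF g] by blast
    then show "\<exists>n\<in>I. N \<le> n \<and> (\<forall>E\<in>Es. \<bar>\<nu> n E - g E\<bar> < \<delta>)"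
      by (auto simp: T_def)
  qed
  then show ?thesis by blast
qed

lemma setwise_cluster_point_S_ba:
  assumes \<nu>: "\<And>n. \<nu> n \<in> S_ba M" and g: "setwise_cluster_point \<nu> I g"
  shows "g \<in> S_ba M"
proof (rule S_baI)
  have "g (A \<union> B) = g A + g B" if AB: "A \<in> sets M" "B \<in> sets M" "A \<inter> B = {}" for A B
  proof (rule eq_if_abs_diff_le_all_pos)
    fix \<delta> :: real assume "0 < \<delta>"
    then obtain n where n: "\<And>E. E \<in> {A, B, A \<union> B} \<Longrightarrow> \<bar>\<nu> n E - g E\<bar> < \<delta>"
      using setwise_cluster_pointD[OF g, of "{A, B, A \<union> B}"] by blast
    have "\<bar>\<nu> n A - g A\<bar> < \<delta>" "\<bar>\<nu> n B - g B\<bar> < \<delta>" "\<bar>\<nu> n (A \<union> B) - g (A \<union> B)\<bar> < \<delta>"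
      using n by auto
    then show "\<bar>g (A \<union> B) - (g A + g B)\<bar> \<le> \<delta> * 3"
      using fa_measure_Un[OF S_ba_fa_measure[OF \<nu>] AB, of n] by (simp add: abs_less_iff abs_le_iff)
  qed
  moreover have "0 \<le> g A" for A
  proof (rule le_if_le_add_all_pos)
    fix \<delta> :: real assume "0 < \<delta>"
    then obtain n where "\<bar>\<nu> n A - g A\<bar> < \<delta>"
      using setwise_cluster_pointD[OF g, of "{A}"] by blast
    then show "0 \<le> g A + \<delta> * 1" using S_ba_range[OF \<nu>, of n A] by (simp add: abs_less_iff)
  qed
  ultimately show "fa_measure M g" by (simp add: fa_measure_def additive_def)
  have "g E = c" if "\<And>n. \<nu> n E = c" for E c
  proof (rule eq_if_abs_diff_le_all_pos)
    fix \<delta> :: real assume "0 < \<delta>"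
    then obtain n where "\<bar>\<nu> n E - g E\<bar> < \<delta>"
      using setwise_cluster_pointD[OF g, of "{E}"] by blast
    then show "\<bar>g E - c\<bar> \<le> \<delta> * 1" using that[of n] by simp
  qed
  then show "g (space M) = 1" "\<And>E. E \<notin> sets M \<Longrightarrow> g E = 0"
    using S_ba_space[OF \<nu>] S_ba_outside[OF \<nu>] by auto
qed

lemma setwise_cluster_point_invariant:
  assumes p: "transition_function M p" and \<nu>: "\<And>n. \<nu> n \<in> S_ba M"
    and inv: "\<And>F. F \<in> sets M \<Longrightarrow> (\<lambda>n. markov_op M p (\<nu> n) F - \<nu> n F) \<longlonglongrightarrow> 0"
    and g: "setwise_cluster_point \<nu> I g" "g \<in> S_ba M"
  shows "markov_op M p g = g"
proof
  fix F
  show "markov_op M p g F = g F"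
  proof (cases "F \<in> sets M")
    case F: True
    note meas = transition_functionD(1)[OF p F] and bdd = transition_function_bounded[OF p F]
    show ?thesis
    proof (rule eq_if_abs_diff_le_all_pos)
      fix \<delta> :: real assume "0 < \<delta>"
      then obtain P where P: "P \<in> fa_partitions M" "fine_for P (\<lambda>x. p x F) \<delta>"
        using fine_partition_exists[OF meas bdd] by blast
      obtain N where N: "\<And>n. N \<le> n \<Longrightarrow> \<bar>markov_op M p (\<nu> n) F - \<nu> n F\<bar> < \<delta>"
        using LIMSEQ_D[OF inv[OF F] \<open>0 < \<delta>\<close>] by auto
      have "0 < \<delta> / (card P + 1)" "\<delta> / (card P + 1) \<le> \<delta>"
        using \<open>0 < \<delta>\<close> by (simp_all add: field_simps)
      then obtain n where "N \<le> n" and n: "\<And>E. E \<in> insert F P \<Longrightarrow> \<bar>\<nu> n E - g E\<bar> < \<delta> / (card P + 1)"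
        using setwise_cluster_pointD[OF g(1), of "insert F P" _ N] fa_partitionsD(1)[OF P(1)] by blast
      have approx: "\<bar>markov_op M p h F - riemann_sum P h (\<lambda>x. p x F)\<bar> \<le> \<delta>" if "h \<in> S_ba M" for h
        using fa_integral_riemann_sum_approx[OF S_ba_fa_measure[OF that] bdd P]
        by (simp add: markov_op_apply[OF F] S_ba_space[OF that])
      have "\<bar>riemann_sum P g (\<lambda>x. p x F) - riemann_sum P (\<nu> n) (\<lambda>x. p x F)\<bar> \<le> \<delta>"
      proof -
        have "(\<Sum>B\<in>P. \<bar>g B - \<nu> n B\<bar>) \<le> card P * (\<delta> / (card P + 1))"
          using n by (intro sum_bounded_above) (auto simp: abs_minus_commute less_imp_le)
        also have "\<dots> \<le> \<delta>"
          using \<open>0 < \<delta>\<close> by (simp add: field_simps)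
        finally show ?thesis
          using transition_functionD(2,3)[OF p _ F]
          by (intro riemann_sum_diff_le[OF P(1), THEN order_trans]) auto
      qed
      moreover have "\<bar>\<nu> n F - g F\<bar> \<le> \<delta>"
        using n[of F] \<open>\<delta> / (card P + 1) \<le> \<delta>\<close> by simp
      ultimately show "\<bar>markov_op M p g F - g F\<bar> \<le> \<delta> * 5"
        using approx[OF g(2)] approx[OF \<nu>[of n]] N[OF \<open>N \<le> n\<close>] by (simp add: abs_le_iff abs_less_iff)
    qed
  qed (use S_ba_outside[OF g(2)] in \<open>simp add: markov_op_def\<close>)
qed

lemma tendsto_unique_invariant_measure:
  assumes p: "transition_function M p" and unique: "Delta_ba M p = {\<mu>}"
    and \<nu>: "\<And>n. \<nu> n \<in> S_ba M"
    and inv: "\<And>F. F \<in> sets M \<Longrightarrow> (\<lambda>n. markov_op M p (\<nu> n) F - \<nu> n F) \<longlonglongrightarrow> 0"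
  shows "(\<lambda>n. \<nu> n E) \<longlonglongrightarrow> \<mu> E"
proof (rule ccontr)
  assume "\<not> (\<lambda>n. \<nu> n E) \<longlonglongrightarrow> \<mu> E"
  then obtain \<epsilon> where "0 < \<epsilon>" and far: "\<And>N. \<exists>n\<ge>N. \<epsilon> \<le> \<bar>\<nu> n E - \<mu> E\<bar>"
    unfolding LIMSEQ_def dist_real_def by (auto simp: not_less)
  define I where "I = {n. \<epsilon> \<le> \<bar>\<nu> n E - \<mu> E\<bar>}"
  have "infinite I"
    using far by (auto simp: I_def infinite_nat_iff_unbounded_le)
  then obtain g where g: "setwise_cluster_point \<nu> I g"
    using setwise_cluster_point_exists[of \<nu> I] S_ba_range[OF \<nu>] by blast
  have "g \<in> S_ba M" by (rule setwise_cluster_point_S_ba[OF \<nu> g])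
  moreover have "markov_op M p g = g"
    by (rule setwise_cluster_point_invariant[OF p \<nu> inv g \<open>g \<in> S_ba M\<close>])
  ultimately have "g = \<mu>" using unique by (auto simp: Delta_ba_def)
  moreover obtain n where "n \<in> I" "\<bar>\<nu> n E - g E\<bar> < \<epsilon>"
    using setwise_cluster_pointD[OF g, of "{E}" \<epsilon>] \<open>0 < \<epsilon>\<close> by auto
  ultimately show False by (simp add: I_def)
qed

section \<open>A Nikodym-type convergence theorem\<close>

lemma alternating_rings:
  fixes G :: "nat \<Rightarrow> 'a set" and N :: "nat \<Rightarrow> nat"
  assumes "decseq G" "strict_mono N" "C 0 = {}"
    and C_Suc: "\<And>k. C (Suc k) = (if even k then C k \<union> (G (N k) - G (N (Suc k))) else C k)"
  shows "incseq C" "C k \<inter> G (N k) = {}" "(\<Union>j. C j) - C k \<subseteq> G (N k)"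
proof -
  have G_N: "G (N j) \<subseteq> G (N k)" if "k \<le> j" for j k
    using assms(1,2) that by (simp add: decseqD strict_mono_less_eq)
  show inc: "incseq C"
    using C_Suc by (intro incseq_SucI) auto
  show "C k \<inter> G (N k) = {}"
  proof (induction k)
    case (Suc k) then show ?case using C_Suc[of k] G_N[of k "Suc k"] by auto
  qed (simp add: assms(3))
  have "C j \<subseteq> C k \<union> G (N k)" for j
  proof (induction j)
    case (Suc j)
    show ?case
    proof (cases "Suc j \<le> k")
      case True then show ?thesis using incseqD[OF inc True] by blast
    next
      case False then show ?thesis using Suc C_Suc[of j] G_N[of k j] by auto
    qed
  qed (simp add: assms(3))
  then show "(\<Union>j. C j) - C k \<subseteq> G (N k)" by blast
qed

lemma sliding_hump_step:
  fixes \<nu> :: "nat \<Rightarrow> 'a set \<Rightarrow> real" and G :: "nat \<Rightarrow> 'a set"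
  assumes conv: "\<And>E. E \<in> sets M \<Longrightarrow> (\<lambda>n. \<nu> n E) \<longlonglongrightarrow> \<mu> E"
    and G: "range G \<subseteq> sets M" "\<And>n. (\<lambda>m. \<nu> n (G m)) \<longlonglongrightarrow> 0"
    and big: "\<epsilon> \<le> \<mu> (G N)" and "0 < \<delta>" and C: "C \<in> sets M"
  obtains n m where "k \<le> n" "N < m" "\<epsilon> - \<delta> < \<nu> n (G N)" "\<nu> n (G m) < \<delta>"
    "\<bar>\<nu> n C - \<mu> C\<bar> < \<delta>"
proof -
  have "\<epsilon> - \<delta> < \<mu> (G N)" using big \<open>0 < \<delta>\<close> by linarith
  then have "\<forall>\<^sub>F n in sequentially. \<epsilon> - \<delta> < \<nu> n (G N)"
    using G(1) by (intro order_tendstoD(1)[OF conv]) auto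
  moreover have "\<forall>\<^sub>F n in sequentially. \<bar>\<nu> n C - \<mu> C\<bar> < \<delta>"
    using tendstoD[OF conv[OF C] \<open>0 < \<delta>\<close>] by (simp add: dist_real_def)
  ultimately have "\<forall>\<^sub>F n in sequentially. k \<le> n \<and> \<epsilon> - \<delta> < \<nu> n (G N) \<and> \<bar>\<nu> n C - \<mu> C\<bar> < \<delta>"
    by (intro eventually_conj eventually_ge_at_top)
  then obtain n where n: "k \<le> n" "\<epsilon> - \<delta> < \<nu> n (G N)" "\<bar>\<nu> n C - \<mu> C\<bar> < \<delta>"
    using eventually_happens'[OF sequentially_bot] by blast
  have "\<forall>\<^sub>F m in sequentially. N < m \<and> \<nu> n (G m) < \<delta>"
    using order_tendstoD(2)[OF G(2)[of n] \<open>0 < \<delta>\<close>] by (intro eventually_conj eventually_gt_at_top)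
  then obtain m where "N < m" "\<nu> n (G m) < \<delta>"
    using eventually_happens'[OF sequentially_bot] by blast
  with n show ?thesis using that by blast
qed

lemma sliding_hump_choice:
  fixes \<nu> :: "nat \<Rightarrow> 'a set \<Rightarrow> real" and G :: "nat \<Rightarrow> 'a set"
  assumes conv: "\<And>E. E \<in> sets M \<Longrightarrow> (\<lambda>n. \<nu> n E) \<longlonglongrightarrow> \<mu> E"
    and G: "range G \<subseteq> sets M" "\<And>n. (\<lambda>m. \<nu> n (G m)) \<longlonglongrightarrow> 0"
    and big: "\<And>N. \<epsilon> \<le> \<mu> (G N)" and "0 < \<delta>"
  obtains N C n where "strict_mono N" "C 0 = {}"
    "\<And>k. C (Suc k) = (if even k then C k \<union> (G (N k) - G (N (Suc k))) else C k)"
    "\<And>k. C k \<in> sets M" "\<And>k. k \<le> n k"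
    "\<And>k. \<epsilon> - \<delta> < \<nu> (n k) (G (N k))" "\<And>k. \<nu> (n k) (G (N (Suc k))) < \<delta>"
    "\<And>k. \<bar>\<nu> (n k) (C k) - \<mu> (C k)\<bar> < \<delta>"
proof -
  \<comment> \<open>The construction carries the pair \<open>(N k, C k)\<close>, since \<open>n k\<close> must be chosen after \<open>C k\<close>.\<close>
  define step where "step k x y \<longleftrightarrow>
      (\<exists>n\<ge>k. \<epsilon> - \<delta> < \<nu> n (G (fst x)) \<and> \<nu> n (G (fst y)) < \<delta> \<and> \<bar>\<nu> n (snd x) - \<mu> (snd x)\<bar> < \<delta>)
      \<and> fst x < fst y \<and> snd y = (if even k then snd x \<union> (G (fst x) - G (fst y)) else snd x)"
    for k :: nat and x y :: "nat \<times> 'a set"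
  have "\<exists>f. \<forall>k. (snd (f k) \<in> sets M \<and> (k = 0 \<longrightarrow> snd (f k) = {})) \<and> step k (f k) (f (Suc k))"
  proof (rule dependent_nat_choice)
    fix x :: "nat \<times> 'a set" and k :: nat
    assume "snd x \<in> sets M \<and> (k = 0 \<longrightarrow> snd x = {})"
    then have x: "snd x \<in> sets M" by blast
    obtain n m where n: "k \<le> n" "fst x < m" "\<epsilon> - \<delta> < \<nu> n (G (fst x))" "\<nu> n (G m) < \<delta>"
      "\<bar>\<nu> n (snd x) - \<mu> (snd x)\<bar> < \<delta>"
      using sliding_hump_step[OF conv G big \<open>0 < \<delta>\<close> x] by blast
    define y where "y = (m, if even k then snd x \<union> (G (fst x) - G m) else snd x)"
    have "snd y \<in> sets M" using x G(1) by (auto simp: y_def)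
    moreover have "step k x y" using n by (auto simp: step_def y_def)
    ultimately show "\<exists>y. (snd y \<in> sets M \<and> (Suc k = 0 \<longrightarrow> snd y = {})) \<and> step k x y" by blast
  qed (rule exI[of _ "(0, {})"], simp)
  then obtain f where f: "\<And>k. snd (f k) \<in> sets M" "snd (f 0) = {}" "\<And>k. step k (f k) (f (Suc k))"
    by blast
  then obtain n where "\<And>k. k \<le> n k \<and> \<epsilon> - \<delta> < \<nu> (n k) (G (fst (f k)))
      \<and> \<nu> (n k) (G (fst (f (Suc k)))) < \<delta> \<and> \<bar>\<nu> (n k) (snd (f k)) - \<mu> (snd (f k))\<bar> < \<delta>"
    unfolding step_def by metis
  moreover have "strict_mono (\<lambda>k. fst (f k))"
    using f(3) by (intro strict_mono_Suc_iff[THEN iffD2]) (simp add: step_def)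
  moreover have "snd (f (Suc k)) = (if even k then snd (f k) \<union> (G (fst (f k)) - G (fst (f (Suc k))))
      else snd (f k))" for k
    using f(3)[of k] by (simp add: step_def)
  ultimately show ?thesis
    using that[of "\<lambda>k. fst (f k)" "\<lambda>k. snd (f k)" n] f(1,2) by blast
qed

(*
  U is the union of every other ring G (N k) - G (N (Suc k)).  For even k the ring of index k
  lies in U and carries nu (n k)-mass about epsilon, for odd k it is disjoint from U; the part
  C k of U below G (N k) is already close to its limit.  So nu (n k) U oscillates by about
  epsilon and cannot converge.
*)
lemma sliding_hump:
  fixes \<nu> :: "nat \<Rightarrow> 'a set \<Rightarrow> real" and G :: "nat \<Rightarrow> 'a set"
  assumes \<nu>: "\<And>n. \<nu> n \<in> S_ba M" and \<mu>: "\<mu> \<in> S_ba M"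
    and conv: "\<And>E. E \<in> sets M \<Longrightarrow> (\<lambda>n. \<nu> n E) \<longlonglongrightarrow> \<mu> E"
    and G: "range G \<subseteq> sets M" "decseq G" "\<And>n. (\<lambda>m. \<nu> n (G m)) \<longlonglongrightarrow> 0"
    and big: "\<And>N. \<epsilon> \<le> \<mu> (G N)" and "0 < \<delta>"
  obtains U n c where "U \<in> sets M" "\<And>k. k \<le> n k" "incseq c"
    "\<And>k. odd k \<Longrightarrow> \<nu> (n k) U < c k + 2 * \<delta>"
    "\<And>k. even k \<Longrightarrow> c k + \<epsilon> - 3 * \<delta> < \<nu> (n k) U"
proof -
  obtain N C n where N: "strict_mono N" and C: "C 0 = {}"
    "\<And>k. C (Suc k) = (if even k then C k \<union> (G (N k) - G (N (Suc k))) else C k)"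
    "\<And>k. C k \<in> sets M" and n: "\<And>k. k \<le> n k"
    and hump: "\<And>k. \<epsilon> - \<delta> < \<nu> (n k) (G (N k))" "\<And>k. \<nu> (n k) (G (N (Suc k))) < \<delta>"
      "\<And>k. \<bar>\<nu> (n k) (C k) - \<mu> (C k)\<bar> < \<delta>"
    using sliding_hump_choice[OF conv G(1,3) big \<open>0 < \<delta>\<close>] by metis
  note rings = alternating_rings[OF G(2) N C(1,2)]
  define U where "U = (\<Union>k. C k)"
  have U: "U \<in> sets M" "\<And>k. C k \<subseteq> U" using C(3) by (auto simp: U_def)
  note fa = S_ba_fa_measure[OF \<nu>]
  have inc: "incseq (\<lambda>k. \<mu> (C k))"
    unfolding incseq_def using C(3) incseqD[OF rings(1)]
    by (intro allI impI fa_measure_mono[OF S_ba_fa_measure[OF \<mu>]]) auto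
  have G_sets: "\<And>j. G j \<in> sets M" using G(1) by auto
  have odd: "\<nu> (n k) U < \<mu> (C k) + 2 * \<delta>" if "odd k" for k
  proof -
    have "U - C k \<subseteq> G (N (Suc k))"
      using rings(3)[of "Suc k"] C(2)[of k] that by (simp add: U_def)
    then have "\<nu> (n k) (U - C k) \<le> \<nu> (n k) (G (N (Suc k)))"
      using U(1) C(3) G_sets by (intro fa_measure_mono[OF fa]) auto
    moreover have "\<nu> (n k) (U - C k) = \<nu> (n k) U - \<nu> (n k) (C k)"
      by (rule fa_measure_Diff[OF fa C(3) U(1) U(2)])
    ultimately show ?thesis using hump(2,3)[of k] by (simp add: abs_less_iff)
  qed
  have even: "\<mu> (C k) + \<epsilon> - 3 * \<delta> < \<nu> (n k) U" if "even k" for k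
  proof -
    have "G (N (Suc k)) \<subseteq> G (N k)"
      using G(2) N by (simp add: decseqD strict_mono_less_eq)
    then have "\<nu> (n k) (G (N k) - G (N (Suc k))) = \<nu> (n k) (G (N k)) - \<nu> (n k) (G (N (Suc k)))"
      using G_sets by (intro fa_measure_Diff[OF fa]) auto
    moreover have "\<nu> (n k) (C (Suc k)) = \<nu> (n k) (C k) + \<nu> (n k) (G (N k) - G (N (Suc k)))"
      using C(2)[of k] that rings(2)[of k] G_sets by (simp add: fa_measure_Un[OF fa C(3)] Diff_Int_distrib)
    moreover have "\<nu> (n k) (C (Suc k)) \<le> \<nu> (n k) U"
      by (rule fa_measure_mono[OF fa C(3) U(1) U(2)])
    ultimately show ?thesis using hump(1,2,3)[of k] by (simp add: abs_less_iff)
  qed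
  show ?thesis by (rule that[OF U(1) n inc odd even])
qed

lemma setwise_limit_countably_additive:
  assumes \<nu>: "\<And>n. \<nu> n \<in> S_ba M" "\<And>n. countably_additive_on M (\<nu> n)" and \<mu>: "\<mu> \<in> S_ba M"
    and conv: "\<And>E. E \<in> sets M \<Longrightarrow> (\<lambda>n. \<nu> n E) \<longlonglongrightarrow> \<mu> E"
  shows "countably_additive_on M \<mu>"
proof (rule countably_additive_onI_decseq[OF S_ba_fa_measure[OF \<mu>]])
  fix G assume G: "range G \<subseteq> sets M" "decseq G" "(\<Inter>n. G n) = {}"
  have "decseq (\<lambda>n. \<mu> (G n))"
    unfolding decseq_def using G(1) decseqD[OF G(2)]
    by (intro allI impI fa_measure_mono[OF S_ba_fa_measure[OF \<mu>]]) auto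
  then obtain L where L: "(\<lambda>n. \<mu> (G n)) \<longlonglongrightarrow> L" "\<And>n. L \<le> \<mu> (G n)"
    using decseq_convergent[of "\<lambda>n. \<mu> (G n)" 0] S_ba_range[OF \<mu>] by auto
  have "L \<le> 0"
  proof (rule ccontr)
    assume "\<not> L \<le> 0"
    define \<delta> where "\<delta> = L / 8"
    have "0 < \<delta>" using \<open>\<not> L \<le> 0\<close> by (simp add: \<delta>_def)
    have tendsto_0: "(\<lambda>m. \<nu> k (G m)) \<longlonglongrightarrow> 0" for k
      using S_ba_range[OF \<nu>(1)] G by (intro countably_additive_on_decseq_tendsto_0[OF \<nu>(2)]) auto
    obtain U n c where U: "U \<in> sets M" and n: "\<And>k. k \<le> n k" and "incseq c"
      and odd: "\<And>k. odd k \<Longrightarrow> \<nu> (n k) U < c k + 2 * \<delta>"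
      and even: "\<And>k. even k \<Longrightarrow> c k + L - 3 * \<delta> < \<nu> (n k) U"
      using sliding_hump[OF \<nu>(1) \<mu> conv G(1,2) tendsto_0 L(2) \<open>0 < \<delta>\<close>] by metis
    obtain K where K: "\<And>k. K \<le> k \<Longrightarrow> \<bar>\<nu> k U - \<mu> U\<bar> < \<delta>"
      using LIMSEQ_D[OF conv[OF U] \<open>0 < \<delta>\<close>] by auto
    have "\<mu> U < c (2 * K + 1) + 3 * \<delta>"
      using odd[of "2 * K + 1"] K[of "n (2 * K + 1)"] n[of "2 * K + 1"] by (simp add: abs_less_iff)
    moreover have "c (2 * K + 2) + L - 4 * \<delta> < \<mu> U"
      using even[of "2 * K + 2"] K[of "n (2 * K + 2)"] n[of "2 * K + 2"] by (simp add: abs_less_iff)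
    moreover have "c (2 * K + 1) \<le> c (2 * K + 2)"
      using \<open>incseq c\<close> by (simp add: incseqD)
    ultimately show False using \<open>\<not> L \<le> 0\<close> by (simp add: \<delta>_def)
  qed
  moreover have "0 \<le> L"
    using L(1) S_ba_range[OF \<mu>] by (intro LIMSEQ_le_const) auto
  ultimately show "(\<lambda>n. \<mu> (G n)) \<longlonglongrightarrow> 0"
    using L(1) by simp
qed

theorem theorem4p7:
  fixes M :: "'a measure" and p :: "'a \<Rightarrow> 'a set \<Rightarrow> real"
    and m :: nat and \<mu> :: "nat \<Rightarrow> 'a set \<Rightarrow> real"
  assumes "infinite (space M)"
    and "\<forall>x\<in>space M. {x} \<in> sets M"
    and "transition_function M p"
    and "is_cycle M p m \<mu>"
    and "\<forall>i<m. \<mu> i \<in> S_ba M"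
    and "Delta_ba M p = {mean_measure m \<mu>}"
  shows "(\<forall>i<m. countably_additive_on M (\<mu> i)) \<and> countably_additive_on M (mean_measure m \<mu>)"
proof -
  note p = assms(3)
  obtain x where x: "x \<in> space M"
    using assms(1) by (metis ex_in_conv finite.emptyI)
  define \<nu> where "\<nu> n = mean_measure (Suc n) (\<lambda>k. (markov_op M p ^^ k) (point_mass M x))" for n
  note \<nu> = point_mass_cesaro_means[OF p x, folded \<nu>_def]
  have "(\<lambda>n. \<nu> n E) \<longlonglongrightarrow> mean_measure m \<mu> E" for E
    by (rule tendsto_unique_invariant_measure[where \<nu> = \<nu>, OF p assms(6) \<nu>(1,3)])
  moreover have "mean_measure m \<mu> \<in> S_ba M"
    using assms(6) by (auto simp: Delta_ba_def)
  ultimately have "countably_additive_on M (mean_measure m \<mu>)"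
    by (intro setwise_limit_countably_additive[where \<nu> = \<nu>, OF \<nu>(1,2)])
  then show ?thesis
    using assms(5) by (auto intro: countably_additive_on_mean_measure_component)
qed

end
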